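(* Let $\mathcal Z$ be an arbitrary set, $\mathcal H\subseteq\{0,1\}^{\mathcal Z}$, and $n\in\mathbb N$ with $n\ge\mathfrak s_0(\mathcal H)$. Let $S=(Z_1,\dots,Z_n)\in\mathcal Z^n$ and for each $h\in\mathcal H$ let $A_h(S)=\{i\in[n]:h(Z_i)=1\}$. Then there exists $I\subseteq[n]$ such that $I\cap A_h(S)\ne\emptyset$ for every $h\in\mathcal H$ with $A_h(S)\ne\emptyset$, and $|I|\le\mathfrak s_0(\mathcal H)$.
   Context: The centered star number $\mathfrak s_0(\mathcal H)$ is the largest $m\in\mathbb N$ such that there exist $z_1,\dots,z_m\in\mathcal Z$ and $h_1,\dots,h_m\in\mathcal H$ with $h_i(z_j)=\mathbf 1\{i=j\}$ for all $i,j\in[m]$, and $\infty$ if no finite maximum exists. *)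

theory Defs
  imports Main "HOL-Library.Extended_Nat"
begin

text \<open>Hypotheses are functions into bool (True = 1, False = 0).
  A centered star set of size m: points z 1..z m and hypotheses h 1..h m in H
  with h i (z j) = (i = j).\<close>

definition centered_star_sizes :: "('z \<Rightarrow> bool) set \<Rightarrow> nat set" where
  "centered_star_sizes H = {m. \<exists>z :: nat \<Rightarrow> 'z. \<exists>h :: nat \<Rightarrow> ('z \<Rightarrow> bool).
      (\<forall>i\<in>{1..m}. h i \<in> H) \<and> (\<forall>i\<in>{1..m}. \<forall>j\<in>{1..m}. h i (z j) = (i = j))}"

definition centered_star_number :: "('z \<Rightarrow> bool) set \<Rightarrow> enat" where
  "centered_star_number H = Sup (enat ` centered_star_sizes H)"

end

theory Submission
  imports Defs
begin

text \<open>A hitting set of minimum cardinality is irredundant: every element i of it has a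
  private set A_h(S) that it alone hits. The hypotheses witnessing these private sets,
  together with the points Z i, form a centered star, so the size of the hitting set is
  bounded by the centered star number.\<close>

lemma minimal_hitting_set_has_private_sets:
  fixes U :: "'a set" and F :: "'a set set"
  assumes "finite U" and "\<forall>A\<in>F. A \<subseteq> U"
  shows "\<exists>I \<subseteq> U. (\<forall>A\<in>F. A \<noteq> {} \<longrightarrow> I \<inter> A \<noteq> {}) \<and> (\<forall>i\<in>I. \<exists>A\<in>F. I \<inter> A = {i})"
proof -
  define hitting where "hitting = (\<lambda>I. I \<subseteq> U \<and> (\<forall>A\<in>F. A \<noteq> {} \<longrightarrow> I \<inter> A \<noteq> {}))"
  have "hitting U"
    using assms(2) unfolding hitting_def by blast
  then obtain I where I: "hitting I" and min: "\<And>J. hitting J \<Longrightarrow> card I \<le> card J"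
    using ex_has_least_nat[of hitting U card] by blast
  have "finite I"
    using I \<open>finite U\<close> finite_subset unfolding hitting_def by blast
  have "\<exists>A\<in>F. I \<inter> A = {i}" if "i \<in> I" for i
  proof -
    have "card (I - {i}) < card I"
      using card_Diff1_less[OF \<open>finite I\<close> \<open>i \<in> I\<close>] .
    then have "\<not> hitting (I - {i})"
      using min leD by blast
    then obtain A where "A \<in> F" "A \<noteq> {}" "(I - {i}) \<inter> A = {}"
      using I unfolding hitting_def by blast
    moreover have "I \<inter> A \<noteq> {}"
      using I \<open>A \<in> F\<close> \<open>A \<noteq> {}\<close> unfolding hitting_def by blast
    ultimately show ?thesis by blast
  qed
  then show ?thesis
    using I unfolding hitting_def by blast
qed

lemma card_in_centered_star_sizes:
  fixes H :: "('z \<Rightarrow> bool) set" and Z :: "'i \<Rightarrow> 'z" and I :: "'i set"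
  assumes "finite I" and star: "\<forall>i\<in>I. \<exists>h\<in>H. \<forall>j\<in>I. h (Z j) = (j = i)"
  shows "card I \<in> centered_star_sizes H"
proof -
  obtain g where g: "\<forall>i\<in>I. g i \<in> H \<and> (\<forall>j\<in>I. g i (Z j) = (j = i))"
    using bchoice[of I "\<lambda>i g. g \<in> H \<and> (\<forall>j\<in>I. g (Z j) = (j = i))"] star by blast
  obtain e where e: "bij_betw e {1..card I} I"
    using ex_bij_betw_nat_finite_1[OF \<open>finite I\<close>] by blast
  show ?thesis
    unfolding centered_star_sizes_def
  proof (intro CollectI exI conjI ballI)
    fix i assume "i \<in> {1..card I}"
    then show "(g \<circ> e) i \<in> H"
      using g bij_betwE[OF e] by simp
  next
    fix i j assume i: "i \<in> {1..card I}" and j: "j \<in> {1..card I}"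
    then have "(g \<circ> e) i ((Z \<circ> e) j) = (e j = e i)"
      using g bij_betwE[OF e] by simp
    also have "\<dots> = (i = j)"
      using bij_betw_imp_inj_on[OF e] i j by (auto simp: inj_on_eq_iff)
    finally show "(g \<circ> e) i ((Z \<circ> e) j) = (i = j)" .
  qed
qed

lemma card_le_centered_star_number:
  assumes "finite I" and "\<forall>i\<in>I. \<exists>h\<in>H. \<forall>j\<in>I. h (Z j) = (j = i)"
  shows "enat (card I) \<le> centered_star_number H"
  using card_in_centered_star_sizes[OF assms]
  unfolding centered_star_number_def by (simp add: Sup_upper)

theorem lemma11:
  fixes H :: "('z \<Rightarrow> bool) set" and n :: nat and Z :: "nat \<Rightarrow> 'z"
  assumes "enat n \<ge> centered_star_number H"
  shows "\<exists>I \<subseteq> {1..n}.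
           (\<forall>h\<in>H. {i\<in>{1..n}. h (Z i)} \<noteq> {} \<longrightarrow> I \<inter> {i\<in>{1..n}. h (Z i)} \<noteq> {})
         \<and> enat (card I) \<le> centered_star_number H"
proof -
  define A where "A = (\<lambda>h. {i\<in>{1..n}. h (Z i)})"
  have "finite {1..n}" and "\<forall>B\<in>A ` H. B \<subseteq> {1..n}"
    unfolding A_def by auto
  then obtain I where I: "I \<subseteq> {1..n}" and hits: "\<forall>h\<in>H. A h \<noteq> {} \<longrightarrow> I \<inter> A h \<noteq> {}"
    and private_sets: "\<forall>i\<in>I. \<exists>h\<in>H. I \<inter> A h = {i}"
    using minimal_hitting_set_has_private_sets[of "{1..n}" "A ` H"] by auto
  have "\<forall>i\<in>I. \<exists>h\<in>H. \<forall>j\<in>I. h (Z j) = (j = i)"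
  proof
    fix i assume "i \<in> I"
    then obtain h where "h \<in> H" "I \<inter> A h = {i}"
      using private_sets by blast
    then show "\<exists>h\<in>H. \<forall>j\<in>I. h (Z j) = (j = i)"
      using I unfolding A_def by blast
  qed
  then have "enat (card I) \<le> centered_star_number H"
    using card_le_centered_star_number finite_subset[OF I] by blast
  with I hits show ?thesis
    unfolding A_def by blast
qed

end
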